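(* Let $f$ be a perfect $2$-coloring of $H(n,q)$ with quotient matrix $\begin{pmatrix} a & b\\ c& d\end{pmatrix}$. If there exists a $1$-perfect code in $H(q+1,q)$, then there exists a perfect $2q$-coloring of $H(qn,q)$ with quotient matrix $T=(t_{i,j})_{i,j=1}^{2q}$, where $t_{i,j}=a$ for $i,j\le q$, $t_{i,j}=b$ for $i\le q<j$, $t_{i,j}=c$ for $j\le q<i$, and $t_{i,j}=d$ for $i,j>q$.
   Context: The Hamming graph $H(n,q)$ has vertex set $\mathbb{Z}_q^n$, two vertices adjacent iff they differ in exactly one coordinate. A perfect $k$-coloring is a surjective map from the vertex set onto $\{1,\dots,k\}$ such that every vertex of color $i$ has exactly $s_{i,j}$ neighbours of color $j$ (depending only on $i,j$); $(s_{i,j})$ is its quotient matrix. A $1$-perfect code in $H(n,q)$ is a set $C$ of vertices such that every radius-$1$ Hamming ball contains exactly one element of $C$. *)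

theory Defs
  imports Main
begin

text \<open>Vertices of H(n,q): words of length n over {0..q-1}, represented extensionally
  as functions nat => nat that vanish outside {0..<n}.\<close>
definition ham_vertices :: "nat \<Rightarrow> nat \<Rightarrow> (nat \<Rightarrow> nat) set" where
  "ham_vertices n q = {x. (\<forall>i<n. x i < q) \<and> (\<forall>i\<ge>n. x i = 0)}"

definition ham_dist :: "nat \<Rightarrow> (nat \<Rightarrow> nat) \<Rightarrow> (nat \<Rightarrow> nat) \<Rightarrow> nat" where
  "ham_dist n x y = card {i. i < n \<and> x i \<noteq> y i}"

definition ham_adj :: "nat \<Rightarrow> (nat \<Rightarrow> nat) \<Rightarrow> (nat \<Rightarrow> nat) \<Rightarrow> bool" where
  "ham_adj n x y \<longleftrightarrow> ham_dist n x y = 1"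

definition perfect_coloring ::
  "nat \<Rightarrow> nat \<Rightarrow> nat \<Rightarrow> ((nat \<Rightarrow> nat) \<Rightarrow> nat) \<Rightarrow> (nat \<Rightarrow> nat \<Rightarrow> nat) \<Rightarrow> bool" where
  "perfect_coloring n q k f S \<longleftrightarrow>
     f ` ham_vertices n q = {1..k} \<and>
     (\<forall>x\<in>ham_vertices n q. \<forall>j\<in>{1..k}.
        card {y\<in>ham_vertices n q. ham_adj n x y \<and> f y = j} = S (f x) j)"

definition one_perfect_code :: "nat \<Rightarrow> nat \<Rightarrow> (nat \<Rightarrow> nat) set \<Rightarrow> bool" where
  "one_perfect_code n q C \<longleftrightarrow> C \<subseteq> ham_vertices n q \<and>
     (\<forall>x\<in>ham_vertices n q. card {c\<in>C. ham_dist n x c \<le> 1} = 1)"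

end

theory Submission
  imports Defs "HOL-Library.FuncSet"
begin

text \<open>
  Let C be a 1-perfect code in H(q+1,q). Its minimum distance is 3 and it has q^(q-1) words, so deleting
  the first and the last coordinate maps C bijectively onto H(q-1,q). Hence every word x of H(q,q)
  has a unique pair (u,v) such that x with its first symbol shifted by u and with v appended lies
  in C. Changing one symbol of x changes u, and for each u' \<noteq> u and each v' exactly one neighbour of x
  receives (u',v'): the pairs form a perfect colouring with q^2 colours of H(q,q).

  Cut a word x of H(qn,q) into n blocks of length q and let (u_i,v_i) be the pair of the i-th block.
  A neighbour of x changes one block, hence exactly one u_i, so (u_1,...,u_n) moves to a neighbour in
  H(n,q); conversely, for every neighbour w of (u_1,...,u_n) and every residue r there is exactly one
  neighbour of x whose first components form w and whose v_i sum to r mod q. Colouring x by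
  (f(u_1,...,u_n), \<Sigma> v_i mod q) therefore gives a perfect 2q-colouring whose quotient matrix repeats
  each entry of that of f in a q \<times> q block.
\<close>

section \<open>The Hamming graph\<close>

definition ham_neighbours :: "nat \<Rightarrow> nat \<Rightarrow> (nat \<Rightarrow> nat) \<Rightarrow> (nat \<Rightarrow> nat) set" where
  "ham_neighbours n q x = {y \<in> ham_vertices n q. ham_adj n x y}"

lemma ham_dist_commute: "ham_dist n x y = ham_dist n y x"
  unfolding ham_dist_def by metis

lemma ham_dist_eq_0_iff: "ham_dist n x y = 0 \<longleftrightarrow> (\<forall>i<n. x i = y i)"
  unfolding ham_dist_def by auto

lemma ham_dist_eq_1_iff:
  "ham_dist n x y = 1 \<longleftrightarrow> (\<exists>i<n. x i \<noteq> y i \<and> (\<forall>k<n. k \<noteq> i \<longrightarrow> x k = y k))"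
proof
  assume "ham_dist n x y = 1"
  then obtain i where "{k. k < n \<and> x k \<noteq> y k} = {i}"
    unfolding ham_dist_def by (metis card_1_singleton_iff One_nat_def)
  then show "\<exists>i<n. x i \<noteq> y i \<and> (\<forall>k<n. k \<noteq> i \<longrightarrow> x k = y k)" by blast
next
  assume "\<exists>i<n. x i \<noteq> y i \<and> (\<forall>k<n. k \<noteq> i \<longrightarrow> x k = y k)"
  then obtain i where "i < n" "x i \<noteq> y i" "\<forall>k<n. k \<noteq> i \<longrightarrow> x k = y k" by blast
  then have "{k. k < n \<and> x k \<noteq> y k} = {i}" by blast
  then show "ham_dist n x y = 1" unfolding ham_dist_def by simp
qed

lemma ham_dist_le_1I: "(\<And>k. k < n \<Longrightarrow> k \<noteq> i \<Longrightarrow> x k = y k) \<Longrightarrow> ham_dist n x y \<le> 1"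
  unfolding ham_dist_def by (rule order.trans[OF card_mono[of "{i}"]]) auto

lemma ham_vertices_eqI:
  assumes "x \<in> ham_vertices n q" "y \<in> ham_vertices n q" "\<And>i. i < n \<Longrightarrow> x i = y i"
  shows "x = y"
proof
  fix i show "x i = y i"
    using assms(3)[of i] assms(1,2) by (cases "i < n") (simp_all add: ham_vertices_def)
qed

lemma bij_betw_ham_vertices_PiE:
  "bij_betw (\<lambda>x. restrict x {..<n}) (ham_vertices n q) (PiE {..<n} (\<lambda>_. {..<q}))"
proof (rule bij_betwI')
  fix x y assume "x \<in> ham_vertices n q" "y \<in> ham_vertices n q"
  then show "(restrict x {..<n} = restrict y {..<n}) = (x = y)"
    by (metis ham_vertices_eqI lessThan_iff restrict_apply')
next
  fix x assume "x \<in> ham_vertices n q"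
  then show "restrict x {..<n} \<in> PiE {..<n} (\<lambda>_. {..<q})" unfolding ham_vertices_def by auto
next
  fix z assume z: "z \<in> PiE {..<n} (\<lambda>_. {..<q})"
  define x where "x i = (if i < n then z i else 0)" for i
  have "x \<in> ham_vertices n q" using z unfolding x_def ham_vertices_def by auto
  moreover have "z = restrict x {..<n}"
    using z unfolding x_def by (auto simp: PiE_iff extensional_def)
  ultimately show "\<exists>x\<in>ham_vertices n q. z = restrict x {..<n}" by blast
qed

lemma card_ham_vertices: "card (ham_vertices n q) = q ^ n"
  using bij_betw_same_card[OF bij_betw_ham_vertices_PiE] by (simp add: card_PiE)

lemma finite_ham_vertices: "finite (ham_vertices n q)"
  using bij_betw_finite[OF bij_betw_ham_vertices_PiE] by (simp add: finite_PiE)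

lemma ham_neighbours_eq:
  assumes x: "x \<in> ham_vertices n q"
  shows "ham_neighbours n q x = (\<lambda>(i, a). x(i := a)) ` (SIGMA i:{..<n}. {..<q} - {x i})"
proof (intro equalityI subsetI)
  fix y assume "y \<in> ham_neighbours n q x"
  then obtain i where i: "i < n" "x i \<noteq> y i" "\<forall>k<n. k \<noteq> i \<longrightarrow> x k = y k"
    and y: "y \<in> ham_vertices n q"
    unfolding ham_neighbours_def ham_adj_def ham_dist_eq_1_iff by blast
  have "y = x(i := y i)" using i x y by (intro ham_vertices_eqI) (auto simp: ham_vertices_def)
  moreover have "(i, y i) \<in> (SIGMA i:{..<n}. {..<q} - {x i})" using i y by (auto simp: ham_vertices_def)
  ultimately show "y \<in> (\<lambda>(i, a). x(i := a)) ` (SIGMA i:{..<n}. {..<q} - {x i})"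
    using rev_image_eqI[of "(i, y i)" _ y "\<lambda>(i, a). x(i := a)"] by simp
next
  fix y assume "y \<in> (\<lambda>(i, a). x(i := a)) ` (SIGMA i:{..<n}. {..<q} - {x i})"
  then obtain i a where "i < n" "a < q" "a \<noteq> x i" "y = x(i := a)" by auto
  then show "y \<in> ham_neighbours n q x"
    using x unfolding ham_neighbours_def ham_adj_def ham_dist_eq_1_iff
    by (auto simp: ham_vertices_def)
qed

lemma card_ham_neighbours:
  assumes x: "x \<in> ham_vertices n q"
  shows "card (ham_neighbours n q x) = n * (q - 1)"
proof -
  let ?\<Sigma> = "SIGMA i:{..<n}. {..<q} - {x i}"
  have "inj_on (\<lambda>(i, a). x(i := a)) ?\<Sigma>"
    by (rule inj_onI) (clarsimp, metis fun_upd_same fun_upd_other)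
  then have "card (ham_neighbours n q x) = card ?\<Sigma>"
    unfolding ham_neighbours_eq[OF x] by (rule card_image)
  also have "\<dots> = (\<Sum>i<n. q - 1)"
    using x by (simp add: card_SigmaI ham_vertices_def)
  finally show ?thesis by simp
qed

lemma ham_ball_eq:
  assumes x: "x \<in> ham_vertices n q"
  shows "{y \<in> ham_vertices n q. ham_dist n x y \<le> 1} = insert x (ham_neighbours n q x)"
proof -
  have "ham_dist n x y = 0 \<longleftrightarrow> y = x" if "y \<in> ham_vertices n q" for y
    using that x ham_vertices_eqI[of x n q y] by (auto simp: ham_dist_eq_0_iff)
  then show ?thesis
    using x unfolding ham_neighbours_def ham_adj_def by (auto simp: le_Suc_eq)
qed

lemma card_ham_ball:
  assumes "x \<in> ham_vertices n q"
  shows "card {y \<in> ham_vertices n q. ham_dist n x y \<le> 1} = 1 + n * (q - 1)"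
proof -
  have "x \<notin> ham_neighbours n q x" by (simp add: ham_neighbours_def ham_adj_def ham_dist_def)
  moreover have "finite (ham_neighbours n q x)"
    by (simp add: ham_neighbours_def finite_ham_vertices)
  ultimately show ?thesis
    unfolding ham_ball_eq[OF assms] by (simp add: card_ham_neighbours[OF assms])
qed

lemma perfect_coloring_colour:
  "perfect_coloring n q k f S \<Longrightarrow> x \<in> ham_vertices n q \<Longrightarrow> f x \<in> {1..k}"
  unfolding perfect_coloring_def by blast

lemma perfect_coloring_cong:
  assumes "perfect_coloring n q k f S" and "\<And>i j. i \<in> {1..k} \<Longrightarrow> j \<in> {1..k} \<Longrightarrow> S i j = S' i j"
  shows "perfect_coloring n q k f S'"
proof -
  have "f x \<in> {1..k}" if "x \<in> ham_vertices n q" for x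
    using assms(1) that by (rule perfect_coloring_colour)
  then show ?thesis using assms unfolding perfect_coloring_def by simp
qed

lemma perfect_coloring_nontrivial:
  assumes f: "perfect_coloring n q k f S" and "2 \<le> k"
  shows "2 \<le> q \<and> 0 < n"
proof (rule ccontr)
  assume trivial: "\<not> (2 \<le> q \<and> 0 < n)"
  have "x = (\<lambda>_. 0)" if "x \<in> ham_vertices n q" for x
  proof
    fix i show "x i = 0"
      using that trivial by (cases "i < n") (auto simp: ham_vertices_def)
  qed
  then have "f ` ham_vertices n q \<subseteq> {f (\<lambda>_. 0)}" by blast
  then have "{1..k} \<subseteq> {f (\<lambda>_. 0)}" using f unfolding perfect_coloring_def by simp
  then have "1 \<in> {f (\<lambda>_. 0)}" "2 \<in> {f (\<lambda>_. 0)}" using \<open>2 \<le> k\<close> by (auto simp: subset_iff)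
  then show False by simp
qed

lemma mod_add_right_cancel_less:
  fixes x y r q :: nat
  assumes "x < q" "y < q" and "(x + r) mod q = (y + r) mod q"
  shows "x = y"
proof -
  obtain k l where "x + r + q * k = y + r + q * l" using assms(3) unfolding nat_mod_eq_iff by blast
  then have "x mod q = y mod q" unfolding nat_mod_eq_iff by auto
  then show ?thesis using assms(1,2) by simp
qed

lemma mod_diff_add_cancel:
  fixes a r q :: nat
  assumes "a < q"
  shows "((a + q - r mod q) mod q + r) mod q = a"
proof -
  have "((a + q - r mod q) mod q + r) mod q = (a + q - r mod q + r mod q) mod q"
    by (metis mod_add_eq mod_mod_trivial)
  also have "\<dots> = (a + q) mod q"
    using assms by (simp add: order.trans[OF mod_le_divisor le_add2])
  also have "\<dots> = a" using assms by simp
  finally show ?thesis .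
qed

lemma mult_add_eq_iff_div_mod:
  fixes a r s t :: nat
  assumes "r < s"
  shows "a * s + r = t \<longleftrightarrow> a = t div s \<and> r = t mod s"
  using assms by (auto simp: div_mult_mod_eq)

lemma div_add_1_eq_if:
  fixes i q :: nat
  assumes "i \<in> {1..2 * q}"
  shows "(i - 1) div q + 1 = (if i \<le> q then 1 else 2)"
proof (cases "i \<le> q")
  case False
  then have "(i - 1 - q) div q = 0" using assms by simp
  then show ?thesis using False assms by (simp add: le_div_geq)
qed (use assms in simp)

section \<open>Pair colourings\<close>

text \<open>A perfect colouring of H(m,q) with the colour set [q] \<times> [s] whose quotient matrix has
  entry 1 between colours with distinct first components and 0 otherwise.\<close>

definition pair_coloring :: "nat \<Rightarrow> nat \<Rightarrow> nat \<Rightarrow> ((nat \<Rightarrow> nat) \<Rightarrow> nat \<times> nat) \<Rightarrow> bool" where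
  "pair_coloring m q s \<phi> \<longleftrightarrow>
     \<phi> ` ham_vertices m q \<subseteq> {..<q} \<times> {..<s} \<and>
     (\<forall>x\<in>ham_vertices m q.
        bij_betw \<phi> (ham_neighbours m q x) (({..<q} - {fst (\<phi> x)}) \<times> {..<s}))"

lemma pair_coloringD:
  assumes "pair_coloring m q s \<phi>" "x \<in> ham_vertices m q"
  shows "fst (\<phi> x) < q" "snd (\<phi> x) < s"
    and "bij_betw \<phi> (ham_neighbours m q x) (({..<q} - {fst (\<phi> x)}) \<times> {..<s})"
proof -
  have "\<phi> x \<in> {..<q} \<times> {..<s}" using assms unfolding pair_coloring_def by blast
  then show "fst (\<phi> x) < q" "snd (\<phi> x) < s" by (simp_all add: mem_Times_iff)
  show "bij_betw \<phi> (ham_neighbours m q x) (({..<q} - {fst (\<phi> x)}) \<times> {..<s})"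
    using assms unfolding pair_coloring_def by blast
qed

lemma pair_coloring_neighbour_fst:
  assumes "pair_coloring m q s \<phi>" "x \<in> ham_vertices m q" "y \<in> ham_neighbours m q x"
  shows "fst (\<phi> y) \<noteq> fst (\<phi> x)"
proof -
  have "\<phi> y \<in> ({..<q} - {fst (\<phi> x)}) \<times> {..<s}"
    using bij_betwE[OF pair_coloringD(3)[OF assms(1,2)]] assms(3) by blast
  then show ?thesis by (simp add: mem_Times_iff)
qed

lemma pair_coloring_surj:
  assumes \<phi>: "pair_coloring m q s \<phi>" and "2 \<le> q" "0 < s"
  shows "\<phi> ` ham_vertices m q = {..<q} \<times> {..<s}"
proof
  show "\<phi> ` ham_vertices m q \<subseteq> {..<q} \<times> {..<s}" using \<phi> unfolding pair_coloring_def by simp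
  have neighbour_colours: "(u, v) \<in> \<phi> ` ham_vertices m q"
    if "x \<in> ham_vertices m q" "u < q" "v < s" "u \<noteq> fst (\<phi> x)" for x u v
  proof -
    have "(u, v) \<in> \<phi> ` ham_neighbours m q x"
      using pair_coloringD(3)[OF \<phi> that(1)] that(2-4) by (simp add: bij_betw_def)
    then show ?thesis unfolding ham_neighbours_def by blast
  qed
  show "{..<q} \<times> {..<s} \<subseteq> \<phi> ` ham_vertices m q"
  proof clarify
    fix u v assume "u < q" "v < s"
    define z :: "nat \<Rightarrow> nat" where "z = (\<lambda>_. 0)"
    have z: "z \<in> ham_vertices m q" using \<open>2 \<le> q\<close> by (simp add: z_def ham_vertices_def)
    show "(u, v) \<in> \<phi> ` ham_vertices m q"
    proof (cases "u = fst (\<phi> z)")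
      case True
      define u' where "u' = (if u = 0 then 1 else 0 :: nat)"
      have "u' < q" "u' \<noteq> u" using \<open>2 \<le> q\<close> by (auto simp: u'_def)
      then obtain y where y: "y \<in> ham_vertices m q" "\<phi> y = (u', 0)"
        using neighbour_colours[OF z, of u' 0] True \<open>0 < s\<close> by auto
      show ?thesis using neighbour_colours[OF y(1) \<open>u < q\<close> \<open>v < s\<close>] y(2) \<open>u' \<noteq> u\<close> by simp
    qed (use neighbour_colours[OF z \<open>u < q\<close> \<open>v < s\<close>] in simp)
  qed
qed

section \<open>The pair colouring of H(q,q) defined by a 1-perfect code in H(q+1,q)\<close>

context
  fixes q :: nat and C :: "(nat \<Rightarrow> nat) set"
  assumes q_pos: "0 < q" and perfect_code: "one_perfect_code (q + 1) q C"
begin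

lemma code_subset: "C \<subseteq> ham_vertices (q + 1) q"
  using perfect_code unfolding one_perfect_code_def by simp

lemma code_covers: "z \<in> ham_vertices (q + 1) q \<Longrightarrow> \<exists>c\<in>C. ham_dist (q + 1) z c \<le> 1"
  using perfect_code unfolding one_perfect_code_def by (metis (no_types, lifting) card.empty empty_Collect_eq zero_neq_one)

lemma code_unique:
  "z \<in> ham_vertices (q + 1) q \<Longrightarrow> c \<in> C \<Longrightarrow> c' \<in> C \<Longrightarrow>
    ham_dist (q + 1) z c \<le> 1 \<Longrightarrow> ham_dist (q + 1) z c' \<le> 1 \<Longrightarrow> c = c'"
  using perfect_code unfolding one_perfect_code_def
  by (metis (no_types, lifting) One_nat_def card_1_singleton_iff mem_Collect_eq singletonD)

lemma code_eq_if_agree_off_two: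
  assumes c: "c \<in> C" and c': "c' \<in> C" and "i \<le> q" "j \<le> q"
    and agree: "\<And>k. k \<noteq> i \<Longrightarrow> k \<noteq> j \<Longrightarrow> c k = c' k"
  shows "c = c'"
proof (rule code_unique)
  show "c(i := c' i) \<in> ham_vertices (q + 1) q"
    using c c' code_subset \<open>i \<le> q\<close> unfolding ham_vertices_def by auto
  show "ham_dist (q + 1) (c(i := c' i)) c \<le> 1" by (rule ham_dist_le_1I[of _ i]) simp
  show "ham_dist (q + 1) (c(i := c' i)) c' \<le> 1"
    by (rule ham_dist_le_1I[of _ j]) (simp add: agree)
qed fact+

lemma card_code: "card C = q ^ (q - 1)"
proof -
  let ?V = "ham_vertices (q + 1) q"
  let ?ball = "\<lambda>c. {y \<in> ?V. ham_dist (q + 1) c y \<le> 1}"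
  have finite_C: "finite C" using code_subset finite_ham_vertices finite_subset by blast
  have "?V = (\<Union>c\<in>C. ?ball c)"
    using code_covers ham_dist_commute by fastforce
  moreover have "card (\<Union>c\<in>C. ?ball c) = (\<Sum>c\<in>C. card (?ball c))"
  proof (rule card_UN_disjoint[OF finite_C])
    show "\<forall>c\<in>C. \<forall>c'\<in>C. c \<noteq> c' \<longrightarrow> ?ball c \<inter> ?ball c' = {}"
      using code_unique ham_dist_commute by (metis (no_types, lifting) Int_emptyI mem_Collect_eq)
  qed (simp add: finite_ham_vertices)
  ultimately have "card ?V = (\<Sum>c\<in>C. card (?ball c))" by simp
  also have "\<dots> = card C * q ^ 2"
  proof -
    have "card (?ball c) = q ^ 2" if "c \<in> C" for c
    proof -
      have "card (?ball c) = 1 + (q + 1) * (q - 1)"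
        using that code_subset by (intro card_ham_ball) auto
      also have "\<dots> = q ^ 2" using q_pos by (cases q) (simp_all add: power2_eq_square)
      finally show ?thesis .
    qed
    then show ?thesis by simp
  qed
  finally have "q ^ (q - 1) * q ^ 2 = card C * q ^ 2"
    using q_pos by (simp add: card_ham_vertices flip: power_add)
  then show ?thesis using q_pos by simp
qed

definition puncture :: "(nat \<Rightarrow> nat) \<Rightarrow> (nat \<Rightarrow> nat)" where
  "puncture c = (\<lambda>i. if i < q - 1 then c (Suc i) else 0)"

lemma puncture_code: "puncture ` C = ham_vertices (q - 1) q"
proof (rule card_subset_eq)
  show "puncture ` C \<subseteq> ham_vertices (q - 1) q"
    using code_subset unfolding puncture_def ham_vertices_def by auto
  have "inj_on puncture C"
  proof (rule inj_onI)
    fix c c' assume "c \<in> C" "c' \<in> C" and eq: "puncture c = puncture c'"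
    show "c = c'"
    proof (rule code_eq_if_agree_off_two[OF \<open>c \<in> C\<close> \<open>c' \<in> C\<close>, of 0 q])
      fix k assume "k \<noteq> 0" "k \<noteq> q"
      show "c k = c' k"
      proof (cases "k < q")
        case True
        then have "k - 1 < q - 1" "Suc (k - 1) = k" using \<open>k \<noteq> 0\<close> by arith+
        then show ?thesis using fun_cong[OF eq, of "k - 1"] by (simp add: puncture_def)
      next
        case False
        have "c \<in> ham_vertices (q + 1) q" "c' \<in> ham_vertices (q + 1) q"
          using code_subset \<open>c \<in> C\<close> \<open>c' \<in> C\<close> by auto
        then show ?thesis using False \<open>k \<noteq> q\<close> by (simp add: ham_vertices_def)
      qed
    qed simp_all
  qed
  then show "card (puncture ` C) = card (ham_vertices (q - 1) q)"
    by (simp add: card_image card_code card_ham_vertices)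
qed (rule finite_ham_vertices)

definition extend :: "nat \<Rightarrow> nat \<Rightarrow> (nat \<Rightarrow> nat) \<Rightarrow> (nat \<Rightarrow> nat)" where
  "extend u v x = (\<lambda>k. if k = 0 then (x 0 + u) mod q else if k < q then x k else if k = q then v else 0)"

lemma extend_in_ham_vertices:
  "x \<in> ham_vertices q q \<Longrightarrow> v < q \<Longrightarrow> extend u v x \<in> ham_vertices (q + 1) q"
  using q_pos unfolding ham_vertices_def extend_def by auto

lemma extend_inj:
  assumes "x \<in> ham_vertices q q" "y \<in> ham_vertices q q" and eq: "extend u v x = extend u v' y"
  shows "x = y"
proof (rule ham_vertices_eqI[OF assms(1,2)])
  fix i assume "i < q"
  show "x i = y i"
  proof (cases "i = 0")
    case True
    have "(x 0 + u) mod q = (y 0 + u) mod q" using fun_cong[OF eq, of 0] by (simp add: extend_def)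
    then show ?thesis
      using True assms(1,2) q_pos by (auto simp: ham_vertices_def intro: mod_add_right_cancel_less)
  next
    case False
    then show ?thesis using fun_cong[OF eq, of i] \<open>i < q\<close> by (simp add: extend_def)
  qed
qed

lemma ex_extend_in_code:
  assumes x: "x \<in> ham_vertices q q"
  shows "\<exists>u<q. \<exists>v<q. extend u v x \<in> C"
proof -
  define w where "w i = (if i < q - 1 then x (Suc i) else 0)" for i
  have "w \<in> puncture ` C"
    using x unfolding puncture_code w_def ham_vertices_def by auto
  then obtain c where c: "c \<in> C" and pc: "w = puncture c" by (rule imageE)
  have cV: "c \<in> ham_vertices (q + 1) q" using c code_subset by auto
  define u where "u = (c 0 + q - x 0 mod q) mod q"
  have "extend u (c q) x = c"
  proof
    fix k show "extend u (c q) x k = c k"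
    proof (cases "0 < k \<and> k < q")
      case True
      then have "k - 1 < q - 1" "Suc (k - 1) = k" by arith+
      then show ?thesis using True fun_cong[OF pc, of "k - 1"] by (simp add: extend_def puncture_def w_def)
    next
      case False
      have "(x 0 + u) mod q = c 0"
        using mod_diff_add_cancel[of "c 0" q "x 0"] cV q_pos
        by (simp add: u_def ham_vertices_def add.commute)
      then show ?thesis using False cV by (auto simp: extend_def ham_vertices_def)
    qed
  qed
  moreover have "u < q" "c q < q" using q_pos cV by (simp_all add: u_def ham_vertices_def)
  ultimately show ?thesis using c by metis
qed

lemma extend_in_code_unique:
  assumes x: "x \<in> ham_vertices q q" and "u < q" "u' < q"
    and c: "extend u v x \<in> C" and c': "extend u' v' x \<in> C"
  shows "u = u' \<and> v = v'"
proof -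
  have eq: "extend u v x = extend u' v' x"
    by (rule code_eq_if_agree_off_two[OF c c', of 0 q]) (auto simp: extend_def)
  have "v = v'" using fun_cong[OF eq, of q] q_pos by (simp add: extend_def)
  moreover have "(u + x 0) mod q = (u' + x 0) mod q"
    using fun_cong[OF eq, of 0] by (simp add: extend_def add.commute)
  then have "u = u'" using assms(2,3) by (rule mod_add_right_cancel_less[rotated 2])
  ultimately show ?thesis by simp
qed

definition code_coloring :: "(nat \<Rightarrow> nat) \<Rightarrow> nat \<times> nat" where
  "code_coloring x = (THE (u, v). u < q \<and> v < q \<and> extend u v x \<in> C)"

lemma code_coloring_eq_iff:
  assumes "x \<in> ham_vertices q q"
  shows "code_coloring x = (u, v) \<longleftrightarrow> u < q \<and> v < q \<and> extend u v x \<in> C"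
proof -
  let ?P = "\<lambda>(u, v). u < q \<and> v < q \<and> extend u v x \<in> C"
  have ex1: "\<exists>!p. ?P p"
  proof -
    obtain u v where "?P (u, v)" using ex_extend_in_code[OF assms] by auto
    moreover have "p = (u, v)" if "?P p" for p
      using that \<open>?P (u, v)\<close> extend_in_code_unique[OF assms] by (cases p) fastforce
    ultimately show ?thesis by blast
  qed
  show ?thesis
  proof
    assume "code_coloring x = (u, v)"
    then show "u < q \<and> v < q \<and> extend u v x \<in> C"
      using theI'[OF ex1] unfolding code_coloring_def by simp
  next
    assume "u < q \<and> v < q \<and> extend u v x \<in> C"
    then show "code_coloring x = (u, v)"
      unfolding code_coloring_def by (intro the1_equality[OF ex1]) simp
  qed
qed

lemma extend_agree_off:
  "(\<And>k. k < q \<Longrightarrow> k \<noteq> i \<Longrightarrow> x k = y k) \<Longrightarrow> k \<noteq> i \<Longrightarrow> extend u v x k = extend u v y k"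
  using q_pos unfolding extend_def by auto

lemma code_coloring_adj:
  assumes x: "x \<in> ham_vertices q q" and y: "y \<in> ham_vertices q q" and "ham_adj q x y"
  shows "fst (code_coloring x) \<noteq> fst (code_coloring y)"
proof
  obtain i where i: "i < q" "x i \<noteq> y i" "\<forall>k<q. k \<noteq> i \<longrightarrow> x k = y k"
    using \<open>ham_adj q x y\<close> unfolding ham_adj_def ham_dist_eq_1_iff by blast
  obtain u v u' v' where cx: "code_coloring x = (u, v)" and cy: "code_coloring y = (u', v')"
    by (meson surj_pair)
  assume "fst (code_coloring x) = fst (code_coloring y)"
  then have "extend u v x \<in> C" "extend u v' y \<in> C"
    using cx cy code_coloring_eq_iff[OF x] code_coloring_eq_iff[OF y] by auto
  then have "extend u v x = extend u v' y"
    by (rule code_eq_if_agree_off_two[of _ _ i q])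
      (use i in \<open>auto simp: extend_def\<close>)
  then have "x = y" by (rule extend_inj[OF x y])
  with i show False by simp
qed

lemma code_coloring_inj_on_neighbours:
  assumes x: "x \<in> ham_vertices q q"
  shows "inj_on code_coloring (ham_neighbours q q x)"
proof (rule inj_onI)
  fix y y' assume "y \<in> ham_neighbours q q x" "y' \<in> ham_neighbours q q x"
    and eq: "code_coloring y = code_coloring y'"
  then have y: "y \<in> ham_vertices q q" "ham_adj q x y" and y': "y' \<in> ham_vertices q q" "ham_adj q x y'"
    unfolding ham_neighbours_def by auto
  obtain u v where cy: "code_coloring y = (u, v)" by (meson surj_pair)
  then have uv: "u < q" "v < q" "extend u v y \<in> C" "extend u v y' \<in> C"
    using eq code_coloring_eq_iff[OF y(1)] code_coloring_eq_iff[OF y'(1)] by auto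
  have near: "ham_dist (q + 1) (extend u v x) (extend u v z) \<le> 1" if adj: "ham_adj q x z" for z
  proof -
    obtain i where "\<forall>k<q. k \<noteq> i \<longrightarrow> x k = z k"
      using adj unfolding ham_adj_def ham_dist_eq_1_iff by blast
    then show ?thesis by (intro ham_dist_le_1I[of _ i] extend_agree_off) auto
  qed
  have "extend u v y = extend u v y'"
    using code_unique[OF extend_in_ham_vertices[OF x \<open>v < q\<close>] uv(3,4) near[OF y(2)] near[OF y'(2)]] .
  then show "y = y'" by (rule extend_inj[OF y(1) y'(1)])
qed

lemma pair_coloring_code_coloring: "pair_coloring q q q code_coloring"
  unfolding pair_coloring_def
proof (intro conjI ballI)
  have range: "fst (code_coloring x) < q \<and> snd (code_coloring x) < q" if "x \<in> ham_vertices q q" for x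
    using code_coloring_eq_iff[OF that] by (cases "code_coloring x") auto
  then show "code_coloring ` ham_vertices q q \<subseteq> {..<q} \<times> {..<q}"
    by (simp add: image_subset_iff mem_Times_iff)
  fix x assume x: "x \<in> ham_vertices q q"
  let ?T = "({..<q} - {fst (code_coloring x)}) \<times> {..<q}"
  have inj: "inj_on code_coloring (ham_neighbours q q x)"
    by (rule code_coloring_inj_on_neighbours[OF x])
  moreover have "code_coloring ` ham_neighbours q q x = ?T"
  proof (rule card_subset_eq)
    show "code_coloring ` ham_neighbours q q x \<subseteq> ?T"
    proof
      fix p assume "p \<in> code_coloring ` ham_neighbours q q x"
      then obtain y where y: "y \<in> ham_vertices q q" "ham_adj q x y" and "p = code_coloring y"
        unfolding ham_neighbours_def by auto
      then show "p \<in> ?T" using range[OF y(1)] code_coloring_adj[OF x y] by (auto simp: mem_Times_iff)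
    qed
    have "fst (code_coloring x) < q" using range[OF x] by auto
    then show "card (code_coloring ` ham_neighbours q q x) = card ?T"
      using card_image[OF inj] card_ham_neighbours[OF x] by (simp add: card_cartesian_product)
  qed simp
  ultimately show "bij_betw code_coloring (ham_neighbours q q x) ?T"
    unfolding bij_betw_def by blast
qed

end

section \<open>Words of H(mn,q) as n blocks of length m\<close>

definition block :: "nat \<Rightarrow> (nat \<Rightarrow> nat) \<Rightarrow> nat \<Rightarrow> (nat \<Rightarrow> nat)" where
  "block m x k = (\<lambda>i. if i < m then x (k * m + i) else 0)"

definition concat_blocks :: "nat \<Rightarrow> nat \<Rightarrow> (nat \<Rightarrow> nat \<Rightarrow> nat) \<Rightarrow> (nat \<Rightarrow> nat)" where
  "concat_blocks m n B = (\<lambda>p. if p < m * n then B (p div m) (p mod m) else 0)"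

lemma block_index_less:
  fixes k n i m :: nat
  assumes "k < n" "i < m"
  shows "k * m + i < m * n"
proof -
  have "k * m + i < Suc k * m" using assms(2) by simp
  also have "\<dots> \<le> n * m" using assms(1) by (intro mult_le_mono1) simp
  finally show ?thesis by (simp add: mult.commute)
qed

lemma div_less_of_less_mult: "p < m * n \<Longrightarrow> p div m < n"
  for p m n :: nat
  by (simp add: less_mult_imp_div_less mult.commute)

lemma block_in_ham_vertices:
  "x \<in> ham_vertices (m * n) q \<Longrightarrow> k < n \<Longrightarrow> block m x k \<in> ham_vertices m q"
  unfolding block_def ham_vertices_def using block_index_less by auto

lemma concat_blocks_in_ham_vertices:
  assumes "\<And>k. k < n \<Longrightarrow> B k \<in> ham_vertices m q"
  shows "concat_blocks m n B \<in> ham_vertices (m * n) q"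
proof -
  have "B (p div m) (p mod m) < q" if "p < m * n" for p
  proof -
    have "p mod m < m" using that by (cases m) auto
    then show ?thesis using assms[OF div_less_of_less_mult[OF that]] by (simp add: ham_vertices_def)
  qed
  then show ?thesis unfolding concat_blocks_def ham_vertices_def by simp
qed

lemma block_concat_blocks:
  assumes "B k \<in> ham_vertices m q" "k < n"
  shows "block m (concat_blocks m n B) k = B k"
proof
  fix i show "block m (concat_blocks m n B) k i = B k i"
    using assms block_index_less[OF \<open>k < n\<close>, of i]
    by (cases "i < m") (simp_all add: block_def concat_blocks_def ham_vertices_def)
qed

lemma block_concat_blocks_update:
  assumes x: "x \<in> ham_vertices (m * n) q" and "i < n" "b \<in> ham_vertices m q" "j < n"
  shows "block m (concat_blocks m n ((block m x)(i := b))) j = ((block m x)(i := b)) j"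
  using assms block_in_ham_vertices[OF x] by (intro block_concat_blocks) auto

lemma concat_blocks_block:
  assumes "x \<in> ham_vertices (m * n) q"
  shows "concat_blocks m n (block m x) = x"
proof
  fix p show "concat_blocks m n (block m x) p = x p"
  proof (cases "p < m * n")
    case True
    then have "p mod m < m" by (cases m) auto
    then show ?thesis using True by (simp add: concat_blocks_def block_def)
  next
    case False
    then show ?thesis using assms by (simp add: concat_blocks_def ham_vertices_def)
  qed
qed

lemma concat_blocks_cong:
  "(\<And>k. k < n \<Longrightarrow> B k = B' k) \<Longrightarrow> concat_blocks m n B = concat_blocks m n B'"
  unfolding concat_blocks_def using div_less_of_less_mult by auto

lemma ham_dist_concat_blocks_update:
  assumes "i < n"
  shows "ham_dist (m * n) (concat_blocks m n B) (concat_blocks m n (B(i := b))) = ham_dist m (B i) b"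
proof -
  have "{p. p < m * n \<and> concat_blocks m n B p \<noteq> concat_blocks m n (B(i := b)) p}
      = (\<lambda>j. i * m + j) ` {j. j < m \<and> B i j \<noteq> b j}"
  proof (intro equalityI subsetI)
    fix p assume "p \<in> {p. p < m * n \<and> concat_blocks m n B p \<noteq> concat_blocks m n (B(i := b)) p}"
    then have p: "p < m * n" and "p div m = i" and "B i (p mod m) \<noteq> b (p mod m)"
      by (cases "p div m = i"; simp add: concat_blocks_def)+
    moreover have "p = i * m + p mod m" using \<open>p div m = i\<close> div_mult_mod_eq[of p m] by simp
    moreover have "p mod m < m" using p by (cases m) auto
    ultimately show "p \<in> (\<lambda>j. i * m + j) ` {j. j < m \<and> B i j \<noteq> b j}" by blast
  next
    fix p assume "p \<in> (\<lambda>j. i * m + j) ` {j. j < m \<and> B i j \<noteq> b j}"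
    then obtain j where "j < m" "B i j \<noteq> b j" "p = i * m + j" by auto
    then show "p \<in> {p. p < m * n \<and> concat_blocks m n B p \<noteq> concat_blocks m n (B(i := b)) p}"
      using block_index_less[OF assms] by (simp add: concat_blocks_def)
  qed
  moreover have "inj_on (\<lambda>j. i * m + j) {j. j < m \<and> B i j \<noteq> b j}" by (rule inj_onI) simp
  ultimately show ?thesis unfolding ham_dist_def by (simp add: card_image)
qed

lemma ham_adj_blocks:
  assumes x: "x \<in> ham_vertices (m * n) q" and y: "y \<in> ham_vertices (m * n) q"
    and "ham_adj (m * n) x y"
  shows "\<exists>i<n. y = concat_blocks m n ((block m x)(i := block m y i))
           \<and> ham_adj m (block m x i) (block m y i)"
proof -
  obtain p where p: "p < m * n" "\<forall>k<m * n. k \<noteq> p \<longrightarrow> x k = y k"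
    using \<open>ham_adj (m * n) x y\<close> unfolding ham_adj_def ham_dist_eq_1_iff by blast
  define i where "i = p div m"
  have "i < n" unfolding i_def using p(1) by (rule div_less_of_less_mult)
  have "block m y k = block m x k" if "k < n" "k \<noteq> i" for k
  proof
    fix j
    have "k * m + j \<noteq> p" if "j < m"
    proof
      assume "k * m + j = p"
      moreover have "0 < m" using that by simp
      ultimately have "p div m = k" using that by auto
      then show False using \<open>k \<noteq> i\<close> unfolding i_def by simp
    qed
    then show "block m y k j = block m x k j"
      using p(2) block_index_less[OF \<open>k < n\<close>] by (simp add: block_def)
  qed
  then have "concat_blocks m n (block m y) = concat_blocks m n ((block m x)(i := block m y i))"
    by (intro concat_blocks_cong) simp
  then have y_eq: "y = concat_blocks m n ((block m x)(i := block m y i))"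
    unfolding concat_blocks_block[OF y] .
  have "ham_dist (m * n) x y = ham_dist m (block m x i) (block m y i)"
    using ham_dist_concat_blocks_update[OF \<open>i < n\<close>, of m "block m x" "block m y i"]
    by (simp only: concat_blocks_block[OF x] flip: y_eq)
  then have "ham_dist m (block m x i) (block m y i) = 1"
    using \<open>ham_adj (m * n) x y\<close> unfolding ham_adj_def by simp
  with \<open>i < n\<close> y_eq show ?thesis unfolding ham_adj_def by blast
qed

lemma ham_neighbours_concat_blocks:
  assumes x: "x \<in> ham_vertices (m * n) q"
  shows "ham_neighbours (m * n) q x =
    (\<Union>i<n. (\<lambda>b. concat_blocks m n ((block m x)(i := b))) ` ham_neighbours m q (block m x i))"
proof (intro equalityI subsetI)
  fix y assume "y \<in> ham_neighbours (m * n) q x"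
  then have y: "y \<in> ham_vertices (m * n) q" "ham_adj (m * n) x y" by (auto simp: ham_neighbours_def)
  then obtain i where "i < n" "y = concat_blocks m n ((block m x)(i := block m y i))"
    "ham_adj m (block m x i) (block m y i)"
    using ham_adj_blocks[OF x] by blast
  moreover have "block m y i \<in> ham_vertices m q" using block_in_ham_vertices[OF y(1) \<open>i < n\<close>] .
  ultimately show "y \<in> (\<Union>i<n. (\<lambda>b. concat_blocks m n ((block m x)(i := b))) ` ham_neighbours m q (block m x i))"
    by (auto simp: ham_neighbours_def)
next
  fix y assume "y \<in> (\<Union>i<n. (\<lambda>b. concat_blocks m n ((block m x)(i := b))) ` ham_neighbours m q (block m x i))"
  then obtain i b where "i < n" "b \<in> ham_vertices m q" "ham_adj m (block m x i) b"
    and y: "y = concat_blocks m n ((block m x)(i := b))"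
    by (auto simp: ham_neighbours_def)
  moreover have "y \<in> ham_vertices (m * n) q"
    unfolding y using block_in_ham_vertices[OF x] \<open>b \<in> ham_vertices m q\<close>
    by (intro concat_blocks_in_ham_vertices) simp
  ultimately show "y \<in> ham_neighbours (m * n) q x"
    using ham_dist_concat_blocks_update[OF \<open>i < n\<close>, of m "block m x" b]
    by (simp add: ham_neighbours_def ham_adj_def concat_blocks_block[OF x])
qed

section \<open>Lifting a perfect colouring along a pair colouring\<close>

context
  fixes m q s n k :: nat and \<phi> :: "(nat \<Rightarrow> nat) \<Rightarrow> nat \<times> nat"
    and f :: "(nat \<Rightarrow> nat) \<Rightarrow> nat" and S :: "nat \<Rightarrow> nat \<Rightarrow> nat"
  assumes q_ge_2: "2 \<le> q" and s_pos: "0 < s" and n_pos: "0 < n"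
    and \<phi>: "pair_coloring m q s \<phi>" and f: "perfect_coloring n q k f S"
begin

definition fst_word :: "(nat \<Rightarrow> nat) \<Rightarrow> (nat \<Rightarrow> nat)" where
  "fst_word x = (\<lambda>i. if i < n then fst (\<phi> (block m x i)) else 0)"

definition snd_sum :: "(nat \<Rightarrow> nat) \<Rightarrow> nat" where
  "snd_sum x = (\<Sum>i<n. snd (\<phi> (block m x i))) mod s"

text \<open>The colour (c, r) \<in> [k] \<times> [s] is numbered (c - 1) s + r + 1.\<close>

definition lift_coloring :: "(nat \<Rightarrow> nat) \<Rightarrow> nat" where
  "lift_coloring x = (f (fst_word x) - 1) * s + snd_sum x + 1"

lemma fst_word_in_ham_vertices:
  "x \<in> ham_vertices (m * n) q \<Longrightarrow> fst_word x \<in> ham_vertices n q"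
  using pair_coloringD(1)[OF \<phi> block_in_ham_vertices] by (simp add: fst_word_def ham_vertices_def)

lemma snd_sum_less: "snd_sum x < s"
  using s_pos by (simp add: snd_sum_def)

lemma lift_coloring_eq_iff:
  assumes "x \<in> ham_vertices (m * n) q" "1 \<le> j"
  shows "lift_coloring x = j \<longleftrightarrow> f (fst_word x) = (j - 1) div s + 1 \<and> snd_sum x = (j - 1) mod s"
proof -
  have "f (fst_word x) \<in> {1..k}"
    using f fst_word_in_ham_vertices[OF assms(1)] by (rule perfect_coloring_colour)
  then have "1 \<le> f (fst_word x)" by simp
  have "lift_coloring x = j \<longleftrightarrow> (f (fst_word x) - 1) * s + snd_sum x = j - 1"
    using assms(2) unfolding lift_coloring_def by arith
  also have "\<dots> \<longleftrightarrow> f (fst_word x) - 1 = (j - 1) div s \<and> snd_sum x = (j - 1) mod s"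
    by (rule mult_add_eq_iff_div_mod[OF snd_sum_less])
  also have "\<dots> \<longleftrightarrow> f (fst_word x) = (j - 1) div s + 1 \<and> snd_sum x = (j - 1) mod s"
    using \<open>1 \<le> f (fst_word x)\<close> by arith
  finally show ?thesis .
qed

lemma lift_coloring_range:
  assumes "x \<in> ham_vertices (m * n) q"
  shows "lift_coloring x \<in> {1..k * s}"
proof -
  have "f (fst_word x) \<in> {1..k}"
    using f fst_word_in_ham_vertices[OF assms] by (rule perfect_coloring_colour)
  then have "f (fst_word x) - 1 < k" by auto
  have "(f (fst_word x) - 1) * s + snd_sum x < Suc (f (fst_word x) - 1) * s"
    using snd_sum_less[of x] by simp
  also have "\<dots> \<le> k * s" using \<open>f (fst_word x) - 1 < k\<close> by (intro mult_le_mono1) simp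
  finally show ?thesis unfolding lift_coloring_def by simp
qed

lemma fst_word_update:
  assumes x: "x \<in> ham_vertices (m * n) q" and i: "i < n" and b: "b \<in> ham_vertices m q"
  shows "fst_word (concat_blocks m n ((block m x)(i := b))) = (fst_word x)(i := fst (\<phi> b))"
  unfolding fst_word_def using i by (auto simp: block_concat_blocks_update[OF x i b])

lemma snd_sum_update:
  assumes x: "x \<in> ham_vertices (m * n) q" and i: "i < n" and b: "b \<in> ham_vertices m q"
  shows "snd_sum (concat_blocks m n ((block m x)(i := b)))
           = (snd (\<phi> b) + (\<Sum>j\<in>{..<n} - {i}. snd (\<phi> (block m x j)))) mod s"
proof -
  have "(\<Sum>j<n. snd (\<phi> (block m (concat_blocks m n ((block m x)(i := b))) j)))
        = (\<Sum>j<n. snd (\<phi> (((block m x)(i := b)) j)))"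
    by (rule sum.cong) (simp_all add: block_concat_blocks_update[OF x i b])
  also have "\<dots> = snd (\<phi> b) + (\<Sum>j\<in>{..<n} - {i}. snd (\<phi> (((block m x)(i := b)) j)))"
    using i by (simp add: sum.remove)
  also have "(\<Sum>j\<in>{..<n} - {i}. snd (\<phi> (((block m x)(i := b)) j)))
           = (\<Sum>j\<in>{..<n} - {i}. snd (\<phi> (block m x j)))"
    by (rule sum.cong) simp_all
  finally show ?thesis unfolding snd_sum_def by (rule arg_cong[where f = "\<lambda>t. t mod s"])
qed

lemma inj_on_fst_word_neighbours:
  assumes x: "x \<in> ham_vertices (m * n) q"
  shows "inj_on fst_word {y \<in> ham_neighbours (m * n) q x. snd_sum y = r}"
proof (rule inj_onI)
  fix y y' assume "y \<in> {y \<in> ham_neighbours (m * n) q x. snd_sum y = r}"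
    and "y' \<in> {y \<in> ham_neighbours (m * n) q x. snd_sum y = r}"
    and eq: "fst_word y = fst_word y'"
  then obtain i b i' b' where i: "i < n" "b \<in> ham_neighbours m q (block m x i)"
    and i': "i' < n" "b' \<in> ham_neighbours m q (block m x i')"
    and y: "y = concat_blocks m n ((block m x)(i := b))"
    and y': "y' = concat_blocks m n ((block m x)(i' := b'))"
    and sums: "snd_sum y = snd_sum y'"
    unfolding ham_neighbours_concat_blocks[OF x] by auto
  have bV: "b \<in> ham_vertices m q" and bV': "b' \<in> ham_vertices m q"
    using i(2) i'(2) by (simp_all add: ham_neighbours_def)
  have words: "(fst_word x)(i := fst (\<phi> b)) = (fst_word x)(i' := fst (\<phi> b'))"
    using eq unfolding y y' fst_word_update[OF x i(1) bV] fst_word_update[OF x i'(1) bV'] .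
  have new: "fst (\<phi> b) \<noteq> fst_word x i"
    using pair_coloring_neighbour_fst[OF \<phi> block_in_ham_vertices[OF x i(1)] i(2)] i(1)
    by (simp add: fst_word_def)
  have "i = i'"
  proof (rule ccontr)
    assume "i \<noteq> i'"
    then show False using fun_cong[OF words, of i] new by simp
  qed
  have "fst (\<phi> b) = fst (\<phi> b')" using fun_cong[OF words, of i] \<open>i = i'\<close> by simp
  moreover have "snd (\<phi> b) = snd (\<phi> b')"
  proof (rule mod_add_right_cancel_less)
    show "snd (\<phi> b) < s" "snd (\<phi> b') < s"
      using pair_coloringD(2)[OF \<phi>] bV bV' by auto
    show "(snd (\<phi> b) + (\<Sum>j\<in>{..<n} - {i}. snd (\<phi> (block m x j)))) mod s
        = (snd (\<phi> b') + (\<Sum>j\<in>{..<n} - {i}. snd (\<phi> (block m x j)))) mod s"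
      using sums \<open>i = i'\<close> unfolding y y' snd_sum_update[OF x i(1) bV] snd_sum_update[OF x i'(1) bV']
      by simp
  qed
  ultimately have "\<phi> b = \<phi> b'" by (simp add: prod_eq_iff)
  then have "b = b'"
    using pair_coloringD(3)[OF \<phi> block_in_ham_vertices[OF x i(1)]] i(2) i'(2) \<open>i = i'\<close>
    by (auto dest: bij_betw_imp_inj_on inj_onD)
  then show "y = y'" unfolding y y' \<open>i = i'\<close> by simp
qed

lemma fst_word_neighbours_image:
  assumes x: "x \<in> ham_vertices (m * n) q" and "r < s"
  shows "fst_word ` {y \<in> ham_neighbours (m * n) q x. snd_sum y = r} = ham_neighbours n q (fst_word x)"
proof (intro equalityI subsetI)
  fix w assume "w \<in> fst_word ` {y \<in> ham_neighbours (m * n) q x. snd_sum y = r}"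
  then obtain i b where i: "i < n" "b \<in> ham_neighbours m q (block m x i)"
    and w: "w = fst_word (concat_blocks m n ((block m x)(i := b)))"
    unfolding ham_neighbours_concat_blocks[OF x] by auto
  have bV: "b \<in> ham_vertices m q" using i(2) by (simp add: ham_neighbours_def)
  have "fst (\<phi> b) \<noteq> fst_word x i"
    using pair_coloring_neighbour_fst[OF \<phi> block_in_ham_vertices[OF x i(1)] i(2)] i(1)
    by (simp add: fst_word_def)
  moreover have "fst (\<phi> b) < q" using pair_coloringD(1)[OF \<phi> bV] .
  ultimately show "w \<in> ham_neighbours n q (fst_word x)"
    unfolding w fst_word_update[OF x i(1) bV] ham_neighbours_eq[OF fst_word_in_ham_vertices[OF x]]
    using i(1) by (intro rev_image_eqI[of "(i, fst (\<phi> b))"]) simp_all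
next
  fix w assume "w \<in> ham_neighbours n q (fst_word x)"
  then obtain i a where i: "i < n" "a < q" "a \<noteq> fst_word x i" and w: "w = (fst_word x)(i := a)"
    unfolding ham_neighbours_eq[OF fst_word_in_ham_vertices[OF x]] by auto
  define R where "R = (\<Sum>j\<in>{..<n} - {i}. snd (\<phi> (block m x j)))"
  define v where "v = (r + s - R mod s) mod s"
  have "(a, v) \<in> ({..<q} - {fst (\<phi> (block m x i))}) \<times> {..<s}"
    using i s_pos by (simp add: v_def fst_word_def)
  then have "(a, v) \<in> \<phi> ` ham_neighbours m q (block m x i)"
    using pair_coloringD(3)[OF \<phi> block_in_ham_vertices[OF x i(1)]] unfolding bij_betw_def by simp
  then obtain b where b: "b \<in> ham_neighbours m q (block m x i)" "\<phi> b = (a, v)" by force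
  have bV: "b \<in> ham_vertices m q" using b(1) by (simp add: ham_neighbours_def)
  define y where "y = concat_blocks m n ((block m x)(i := b))"
  have "y \<in> ham_neighbours (m * n) q x"
    unfolding y_def ham_neighbours_concat_blocks[OF x] using i(1) b(1) by blast
  moreover have "snd_sum y = r"
    using mod_diff_add_cancel[OF \<open>r < s\<close>, of R]
    unfolding y_def snd_sum_update[OF x i(1) bV] b(2) R_def[symmetric] by (simp add: v_def)
  moreover have "fst_word y = w" unfolding y_def fst_word_update[OF x i(1) bV] w b(2) by simp
  ultimately show "w \<in> fst_word ` {y \<in> ham_neighbours (m * n) q x. snd_sum y = r}" by blast
qed

lemma card_lift_coloring_neighbours:
  assumes x: "x \<in> ham_vertices (m * n) q" and j: "j \<in> {1..k * s}"
  shows "card {y \<in> ham_vertices (m * n) q. ham_adj (m * n) x y \<and> lift_coloring y = j}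
           = S (f (fst_word x)) ((j - 1) div s + 1)"
proof -
  let ?c = "(j - 1) div s + 1" and ?N = "{y \<in> ham_neighbours (m * n) q x. snd_sum y = (j - 1) mod s}"
  have inj: "inj_on fst_word ?N" by (rule inj_on_fst_word_neighbours[OF x])
  have image: "fst_word ` ?N = ham_neighbours n q (fst_word x)"
    using fst_word_neighbours_image[OF x] s_pos by simp
  have neighbours: "{y \<in> ham_vertices (m * n) q. ham_adj (m * n) x y \<and> lift_coloring y = j}
        = {y \<in> ?N. f (fst_word y) = ?c}"
    using j lift_coloring_eq_iff by (auto simp: ham_neighbours_def)
  have "card {y \<in> ?N. f (fst_word y) = ?c} = card (fst_word ` {y \<in> ?N. f (fst_word y) = ?c})"
    by (rule card_image[symmetric], rule inj_on_subset[OF inj]) auto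
  also have "fst_word ` {y \<in> ?N. f (fst_word y) = ?c} = {w \<in> ham_neighbours n q (fst_word x). f w = ?c}"
    unfolding image[symmetric] by blast
  also have "card \<dots> = S (f (fst_word x)) ?c"
  proof -
    have "(j - 1) div s < k" using j by (intro less_mult_imp_div_less) auto
    then show ?thesis
      using f fst_word_in_ham_vertices[OF x]
      unfolding perfect_coloring_def ham_neighbours_def by auto
  qed
  finally show ?thesis unfolding neighbours .
qed

lemma ex_fst_word_snd_sum:
  assumes w: "w \<in> ham_vertices n q" and "r < s"
  shows "\<exists>y \<in> ham_vertices (m * n) q. fst_word y = w \<and> snd_sum y = r"
proof -
  have ex: "\<exists>b. b \<in> ham_vertices m q \<and> \<phi> b = (w i, if i = 0 then r else 0)" if "i < n" for i
  proof -
    have "(w i, if i = 0 then r else 0) \<in> \<phi> ` ham_vertices m q"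
      unfolding pair_coloring_surj[OF \<phi> q_ge_2 s_pos]
      using w that \<open>r < s\<close> s_pos by (simp add: ham_vertices_def)
    then obtain b where "b \<in> ham_vertices m q" "(w i, if i = 0 then r else 0) = \<phi> b"
      by (rule imageE)
    then show ?thesis by metis
  qed
  define B where "B i = (SOME b. b \<in> ham_vertices m q \<and> \<phi> b = (w i, if i = 0 then r else 0))" for i
  have B: "B i \<in> ham_vertices m q" "\<phi> (B i) = (w i, if i = 0 then r else 0)" if "i < n" for i
    using someI_ex[OF ex[OF that]] unfolding B_def by simp_all
  define y where "y = concat_blocks m n B"
  have y: "y \<in> ham_vertices (m * n) q" unfolding y_def using B(1) by (rule concat_blocks_in_ham_vertices)
  have blocks: "block m y i = B i" if "i < n" for i
    unfolding y_def using B(1)[OF that] that by (rule block_concat_blocks)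
  have "fst_word y = w"
    by (rule ham_vertices_eqI[OF fst_word_in_ham_vertices[OF y] w]) (simp add: fst_word_def blocks B(2))
  moreover have "(\<Sum>i<n. snd (\<phi> (block m y i))) = (\<Sum>i<n. if i = 0 then r else 0)"
    by (rule sum.cong) (simp_all add: blocks B(2))
  then have "snd_sum y = r" using n_pos \<open>r < s\<close> by (simp add: snd_sum_def)
  ultimately show ?thesis using y by blast
qed

lemma lift_coloring_surj: "lift_coloring ` ham_vertices (m * n) q = {1..k * s}"
proof
  show "lift_coloring ` ham_vertices (m * n) q \<subseteq> {1..k * s}"
    using lift_coloring_range by blast
  show "{1..k * s} \<subseteq> lift_coloring ` ham_vertices (m * n) q"
  proof
    fix j assume j: "j \<in> {1..k * s}"
    have "(j - 1) div s < k" using j by (intro less_mult_imp_div_less) auto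
    then have "(j - 1) div s + 1 \<in> f ` ham_vertices n q"
      using f unfolding perfect_coloring_def by auto
    then obtain w where w: "w \<in> ham_vertices n q" "f w = (j - 1) div s + 1" by auto
    have "(j - 1) mod s < s" using s_pos by simp
    then obtain y where y: "y \<in> ham_vertices (m * n) q" "fst_word y = w" "snd_sum y = (j - 1) mod s"
      using ex_fst_word_snd_sum[OF w(1)] by blast
    then have "lift_coloring y = j" using lift_coloring_eq_iff[OF y(1)] j w(2) by simp
    then show "j \<in> lift_coloring ` ham_vertices (m * n) q" using y(1) by blast
  qed
qed

lemma perfect_coloring_lift_coloring:
  "perfect_coloring (m * n) q (k * s) lift_coloring (\<lambda>i j. S ((i - 1) div s + 1) ((j - 1) div s + 1))"
  unfolding perfect_coloring_def
proof (intro conjI ballI)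
  show "lift_coloring ` ham_vertices (m * n) q = {1..k * s}" by (rule lift_coloring_surj)
  fix x j assume x: "x \<in> ham_vertices (m * n) q" and j: "j \<in> {1..k * s}"
  have "1 \<le> lift_coloring x" using lift_coloring_range[OF x] by simp
  then have "f (fst_word x) = (lift_coloring x - 1) div s + 1"
    using iffD1[OF lift_coloring_eq_iff[OF x] refl] by blast
  then show "card {y \<in> ham_vertices (m * n) q. ham_adj (m * n) x y \<and> lift_coloring y = j}
      = S ((lift_coloring x - 1) div s + 1) ((j - 1) div s + 1)"
    using card_lift_coloring_neighbours[OF x j] by simp
qed

end

lemma perfect_coloring_lift:
  assumes "2 \<le> q" "0 < s" "0 < n" "pair_coloring m q s \<phi>" "perfect_coloring n q k f S"
  shows "\<exists>g. perfect_coloring (m * n) q (k * s) g (\<lambda>i j. S ((i - 1) div s + 1) ((j - 1) div s + 1))"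
  using perfect_coloring_lift_coloring[OF assms] by blast

lemma two_block_matrix_entry:
  fixes q :: nat
  assumes "S 1 1 = a" "S 1 2 = b" "S 2 1 = c" "S 2 2 = d"
    and "i \<in> {1..2 * q}" "j \<in> {1..2 * q}"
  shows "S ((i - 1) div q + 1) ((j - 1) div q + 1)
           = (if i \<le> q \<and> j \<le> q then a else if i \<le> q \<and> q < j then b
              else if j \<le> q \<and> q < i then c else d)"
  unfolding div_add_1_eq_if[OF assms(5)] div_add_1_eq_if[OF assms(6)] using assms(1-4) by auto

theorem lemma8:
  fixes n q a b c d :: nat and f :: "(nat \<Rightarrow> nat) \<Rightarrow> nat" and S :: "nat \<Rightarrow> nat \<Rightarrow> nat"
  assumes "perfect_coloring n q 2 f S"
    and "S 1 1 = a" and "S 1 2 = b" and "S 2 1 = c" and "S 2 2 = d"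
    and "\<exists>C. one_perfect_code (q + 1) q C"
  shows "\<exists>g. perfect_coloring (q * n) q (2 * q) g
           (\<lambda>i j. if i \<le> q \<and> j \<le> q then a
                  else if i \<le> q \<and> q < j then b
                  else if j \<le> q \<and> q < i then c
                  else d)"
proof -
  obtain C where C: "one_perfect_code (q + 1) q C" using assms(6) by blast
  have "2 \<le> q" "0 < n" using perfect_coloring_nontrivial[OF assms(1)] by auto
  then have "0 < q" by simp
  then have "pair_coloring q q q (code_coloring q C)" by (rule pair_coloring_code_coloring[OF _ C])
  then obtain g where "perfect_coloring (q * n) q (2 * q) g
      (\<lambda>i j. S ((i - 1) div q + 1) ((j - 1) div q + 1))"
    using perfect_coloring_lift[OF \<open>2 \<le> q\<close> \<open>0 < q\<close> \<open>0 < n\<close> _ assms(1)] by blast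
  from perfect_coloring_cong[OF this two_block_matrix_entry[OF assms(2-5)]] show ?thesis by blast
qed

end
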